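(* Consider the two-stage cooperative cellular/D2D recovery model described in the context, with lossless links in the second stage, and suppose the algorithm NCMI-Instant (described in the context) is used. Then its packet completion time $T$ satisfies \[ T \leq \left\lceil \min\Big(\max \big(\tfrac{M}{2},|\mathcal{M}_c|\big),\ \max\big(|\mathcal{M}_c|,\tfrac{1}{3}\big(2 \min_{n \in \mathcal{N}} |\mathcal{W}_n|+|\mathcal{M}_d|\big), \tfrac{1}{2}\big(\min_{n \in \mathcal{N}} |\mathcal{W}_n|+|\mathcal{M}_d|\big)\big)\Big) \right\rceil . \]
   Context: Model: a set $\mathcal{N}$ of $N\ge 2$ cooperating mobile devices want a common finite set $\mathcal{M}$ of packets, $M=|\mathcal{M}|$. After a lossy first-stage cellular broadcast, device $n$ holds its Has set $\mathcal{H}_n\subseteq\mathcal{M}$ and misses its Wants set $\mathcal{W}_n=\mathcal{M}\setminus\mathcal{H}_n$; every packet of $\mathcal{M}$ is wanted by at least one device. In the second stage time is slotted; in each slot the source (holding all packets) may broadcast one coded packet over cellular links to all devices and simultaneously one device may broadcast over D2D links to all other devices one coded packet composed only of packets it holds. The packet completion time $T$ is the number of second-stage slots until every device has decoded all packets of its Wants set. Second-stage links are lossless. Grouping (Algorithm 1): process $p_1,\dots,p_M$ in order; for $p_m$ form a length-$N$ vector $v_m$ with $v_m[n]=p_m$ if $p_m\in\mathcal{W}_n$, else NULL. If a previously formed vector $v_{m'}$ has $v_{m'}[n]=\mathrm{NULL}$ for all $n$ with $v_m[n]=p_m$, replace $v_{m'}$ by $v_{m'}+v_m$ (entrywise, $p+\mathrm{NULL}=p$)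 and discard $v_m$. Each final vector gives an instantly decodable coded packet, the XOR of its distinct non-NULL entries. $\mathcal{M}_c$: coded packets from vectors whose entries are all equal and non-NULL (packets wanted by all devices); $\mathcal{M}_d$: from vectors with at least one NULL entry (sendable in one D2D slot by a device $x$ with $v[x]=\mathrm{NULL}$); $\mathcal{M}_l$: from the remaining vectors (no NULL, at least two distinct entries), each of which is sent over D2D by splitting it into two parts each held by some device (two D2D slots). NCMI-Instant (lossless): compute $\mathcal{M}_c,\mathcal{M}_l,\mathcal{M}_d$ once. In each slot the source sends a not-yet-sent packet from $\mathcal{M}_c$ if any remain, else from $\mathcal{M}_l$, else from $\mathcal{M}_d$; simultaneously a device sends a not-yet-sent packet of $\mathcal{M}_d$ if any remain, and otherwise one part of a not-yet-sent packet of $\mathcal{M}_l$. Each coded packet is sent once (across both interfaces). *)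

theory Defs
  imports Complex_Main
begin

(* Devices are 0..<N, packets are of type 'p. The packet set M is given as a
   duplicate-free list ps = [p_1,...,p_M] (its order is the processing order of
   Algorithm 1).  H n is the Has set of device n. *)

type_synonym 'p vec = "nat \<Rightarrow> 'p option"   (* None = NULL; only entries n < N matter *)

definition wants :: "'p list \<Rightarrow> (nat \<Rightarrow> 'p set) \<Rightarrow> nat \<Rightarrow> 'p set" where
  "wants ps H n = set ps - H n"

definition mkvec :: "nat \<Rightarrow> 'p list \<Rightarrow> (nat \<Rightarrow> 'p set) \<Rightarrow> 'p \<Rightarrow> 'p vec" where
  "mkvec N ps H p = (\<lambda>n. if n < N \<and> p \<in> wants ps H n then Some p else None)"

definition mergeable :: "nat \<Rightarrow> 'p vec \<Rightarrow> 'p vec \<Rightarrow> bool" where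
  "mergeable N u v = (\<forall>n<N. v n \<noteq> None \<longrightarrow> u n = None)"

definition merge :: "'p vec \<Rightarrow> 'p vec \<Rightarrow> 'p vec" where
  "merge u v = (\<lambda>n. case u n of None \<Rightarrow> v n | Some q \<Rightarrow> Some q)"

fun insert_vec :: "nat \<Rightarrow> 'p vec \<Rightarrow> 'p vec list \<Rightarrow> 'p vec list" where
  "insert_vec N v [] = [v]"
| "insert_vec N v (u # us) =
     (if mergeable N u v then merge u v # us else u # insert_vec N v us)"

definition grouping :: "nat \<Rightarrow> 'p list \<Rightarrow> (nat \<Rightarrow> 'p set) \<Rightarrow> 'p vec list" where
  "grouping N ps H = foldl (\<lambda>vs p. insert_vec N (mkvec N ps H p) vs) [] ps"

(* the packets XORed in the coded packet of a vector (its distinct non-NULL entries) *)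
definition coded :: "nat \<Rightarrow> 'p vec \<Rightarrow> 'p set" where
  "coded N v = {p. \<exists>n<N. v n = Some p}"

definition is_Mc :: "nat \<Rightarrow> 'p vec \<Rightarrow> bool" where
  "is_Mc N v = ((\<forall>n<N. v n \<noteq> None) \<and> (\<forall>n<N. \<forall>m<N. v n = v m))"

definition is_Md :: "nat \<Rightarrow> 'p vec \<Rightarrow> bool" where
  "is_Md N v = (\<exists>n<N. v n = None)"

definition is_Ml :: "nat \<Rightarrow> 'p vec \<Rightarrow> bool" where
  "is_Ml N v = (\<not> is_Mc N v \<and> \<not> is_Md N v)"

definition Mc :: "nat \<Rightarrow> 'p list \<Rightarrow> (nat \<Rightarrow> 'p set) \<Rightarrow> 'p vec list" where
  "Mc N ps H = filter (is_Mc N) (grouping N ps H)"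

definition Md :: "nat \<Rightarrow> 'p list \<Rightarrow> (nat \<Rightarrow> 'p set) \<Rightarrow> 'p vec list" where
  "Md N ps H = filter (is_Md N) (grouping N ps H)"

definition Ml :: "nat \<Rightarrow> 'p list \<Rightarrow> (nat \<Rightarrow> 'p set) \<Rightarrow> 'p vec list" where
  "Ml N ps H = filter (is_Ml N) (grouping N ps H)"

definition valid_split :: "nat \<Rightarrow> 'p list \<Rightarrow> (nat \<Rightarrow> 'p set)
    \<Rightarrow> ('p vec \<Rightarrow> 'p set \<times> 'p set) \<Rightarrow> bool" where
  "valid_split N ps H sp = (\<forall>v \<in> set (Ml N ps H).
      fst (sp v) \<union> snd (sp v) = coded N v \<and> fst (sp v) \<inter> snd (sp v) = {} \<and>
      fst (sp v) \<noteq> {} \<and> snd (sp v) \<noteq> {} \<and>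
      (\<exists>x<N. fst (sp v) \<subseteq> H x) \<and> (\<exists>x<N. snd (sp v) \<subseteq> H x))"

(* scheduler state: not-yet-sent packets of M_c, M_l, M_d, and an M_l packet
   whose first part has been sent over D2D (second part pending) *)
type_synonym 'p sstate = "'p vec list \<times> 'p vec list \<times> 'p vec list \<times> 'p vec option"

(* one slot of NCMI-Instant: returns the contents (packet sets XORed) of the
   transmissions of this slot (cellular, then D2D) and the new state *)
definition ncmi_step :: "nat \<Rightarrow> ('p vec \<Rightarrow> 'p set \<times> 'p set) \<Rightarrow> 'p sstate
    \<Rightarrow> 'p set list \<times> 'p sstate" where
  "ncmi_step N sp st = (case st of (cs, ls, ds, pend) \<Rightarrow>
     let (tx1, cs1, ls1, ds1) =
           (if cs \<noteq> [] then ([coded N (hd cs)], tl cs, ls, ds)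
            else if ls \<noteq> [] then ([coded N (hd ls)], cs, tl ls, ds)
            else if ds \<noteq> [] then ([coded N (hd ds)], cs, ls, tl ds)
            else ([], cs, ls, ds));
         (tx2, ls2, ds2, pend2) =
           (if ds1 \<noteq> [] then ([coded N (hd ds1)], ls1, tl ds1, pend)
            else (case pend of
                    Some v \<Rightarrow> ([snd (sp v)], ls1, ds1, None)
                  | None \<Rightarrow> (if ls1 \<noteq> [] then ([fst (sp (hd ls1))], tl ls1, ds1, Some (hd ls1))
                             else ([], ls1, ds1, None))))
     in (tx1 @ tx2, (cs1, ls2, ds2, pend2)))"

definition ncmi_init :: "nat \<Rightarrow> 'p list \<Rightarrow> (nat \<Rightarrow> 'p set) \<Rightarrow> 'p sstate" where
  "ncmi_init N ps H = (Mc N ps H, Ml N ps H, Md N ps H, None)"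

fun ncmi_state :: "nat \<Rightarrow> 'p list \<Rightarrow> (nat \<Rightarrow> 'p set) \<Rightarrow> ('p vec \<Rightarrow> 'p set \<times> 'p set)
    \<Rightarrow> nat \<Rightarrow> 'p sstate" where
  "ncmi_state N ps H sp 0 = ncmi_init N ps H"
| "ncmi_state N ps H sp (Suc k) = snd (ncmi_step N sp (ncmi_state N ps H sp k))"

(* transmissions in slot s (s \<ge> 1) *)
definition ncmi_tx :: "nat \<Rightarrow> 'p list \<Rightarrow> (nat \<Rightarrow> 'p set) \<Rightarrow> ('p vec \<Rightarrow> 'p set \<times> 'p set)
    \<Rightarrow> nat \<Rightarrow> 'p set list" where
  "ncmi_tx N ps H sp s = fst (ncmi_step N sp (ncmi_state N ps H sp (s - 1)))"

definition decoded_by :: "nat \<Rightarrow> 'p list \<Rightarrow> (nat \<Rightarrow> 'p set) \<Rightarrow> ('p vec \<Rightarrow> 'p set \<times> 'p set)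
    \<Rightarrow> nat \<Rightarrow> nat \<Rightarrow> 'p \<Rightarrow> bool" where
  "decoded_by N ps H sp t n p =
     (\<exists>s\<in>{1..t}. \<exists>S\<in>set (ncmi_tx N ps H sp s). p \<in> S \<and> S - {p} \<subseteq> H n)"

definition all_decoded :: "nat \<Rightarrow> 'p list \<Rightarrow> (nat \<Rightarrow> 'p set) \<Rightarrow> ('p vec \<Rightarrow> 'p set \<times> 'p set)
    \<Rightarrow> nat \<Rightarrow> bool" where
  "all_decoded N ps H sp t = (\<forall>n<N. \<forall>p\<in>wants ps H n. decoded_by N ps H sp t n p)"

definition completion_time :: "nat \<Rightarrow> 'p list \<Rightarrow> (nat \<Rightarrow> 'p set) \<Rightarrow> ('p vec \<Rightarrow> 'p set \<times> 'p set)
    \<Rightarrow> nat" where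
  "completion_time N ps H sp = (LEAST t. all_decoded N ps H sp t)"

end

theory Submission
  imports Defs
begin

text \<open>Algorithm 1 merges a packet only into a vector whose columns wanting it are still empty.
  Hence every entry in column \<open>n\<close> of a final vector is wanted by device \<open>n\<close>, and a packet of
  the vector wanted by \<open>n\<close> sits in column \<open>n\<close>: a device with an entry holds all other packets
  of the vector and of both split parts, so every transmission is instantly decodable and all
  devices are done once the schedule has emptied its queues. As each packet lies in exactly
  one vector, \<open>|M\<^sub>c| + 2|M\<^sub>l| + |M\<^sub>d| \<le> M\<close>; as a vector outside \<open>M\<^sub>d\<close> has an entry
  in every column, \<open>|M\<^sub>c| + |M\<^sub>l| \<le> |W\<^sub>n|\<close>. The completion time is then bounded by two
  potentials on the scheduler state that decrease by one per slot, and these two inequalities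
  bound their initial values by the two arguments of the minimum.\<close>

section \<open>Grouping\<close>

definition wellformed_vec :: "nat \<Rightarrow> 'p list \<Rightarrow> (nat \<Rightarrow> 'p set) \<Rightarrow> 'p vec \<Rightarrow> bool" where
  "wellformed_vec N ps H u \<longleftrightarrow>
     (\<forall>n<N. \<forall>p. u n = Some p \<longrightarrow> p \<in> wants ps H n) \<and>
     (\<forall>n<N. \<forall>m<N. \<forall>q. u m = Some q \<longrightarrow> q \<in> wants ps H n \<longrightarrow> u n = Some q) \<and>
     coded N u \<noteq> {}"

definition grouping_of :: "nat \<Rightarrow> 'p list \<Rightarrow> (nat \<Rightarrow> 'p set) \<Rightarrow> 'p list \<Rightarrow> 'p vec list" where
  "grouping_of N ps H xs = foldl (\<lambda>vs p. insert_vec N (mkvec N ps H p) vs) [] xs"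

lemma grouping_eq_grouping_of: "grouping N ps H = grouping_of N ps H ps"
  by (simp add: grouping_def grouping_of_def)

lemma grouping_of_snoc:
  "grouping_of N ps H (xs @ [x]) = insert_vec N (mkvec N ps H x) (grouping_of N ps H xs)"
  by (simp add: grouping_of_def)

lemma finite_coded: "finite (coded N u)"
proof -
  have "coded N u \<subseteq> (\<lambda>n. the (u n)) ` {..<N}"
    unfolding coded_def by force
  then show ?thesis
    by (rule finite_subset) simp
qed

lemma coded_merge_subset: "coded N (merge u v) \<subseteq> coded N u \<union> coded N v"
  unfolding coded_def merge_def by (auto split: option.splits)

lemma coded_mkvec_subset: "coded N (mkvec N ps H p) \<subseteq> {p}"
  unfolding coded_def mkvec_def by (auto split: if_splits)

lemma insert_vec_preserves:
  assumes "P v" and "\<forall>u\<in>set us. P u"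
    and "\<And>u. P u \<Longrightarrow> mergeable N u v \<Longrightarrow> P (merge u v)"
  shows "\<forall>w\<in>set (insert_vec N v us). P w"
  using assms by (induction us) auto

lemma insert_vec_keeps_entries:
  assumes "u \<in> set us"
  shows "\<exists>w\<in>set (insert_vec N v us). \<forall>n. u n \<noteq> None \<longrightarrow> w n = u n"
  using assms
proof (induction us)
  case (Cons a us)
  show ?case
  proof (cases "u = a")
    case True
    then show ?thesis by (auto simp: merge_def split: option.splits)
  next
    case False
    with Cons obtain w where "w \<in> set (insert_vec N v us)" "\<forall>n. u n \<noteq> None \<longrightarrow> w n = u n"
      by auto
    with False Cons.prems show ?thesis by auto
  qed
qed simp

lemma insert_vec_contains_entries:
  "\<exists>w\<in>set (insert_vec N v us). \<forall>n<N. v n \<noteq> None \<longrightarrow> w n = v n"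
  by (induction us) (auto simp: mergeable_def merge_def)

lemma sum_list_insert_vec_le:
  fixes f :: "'p vec \<Rightarrow> nat"
  assumes "f v \<le> k" and "\<And>u. mergeable N u v \<Longrightarrow> f (merge u v) \<le> f u + k"
  shows "sum_list (map f (insert_vec N v us)) \<le> sum_list (map f us) + k"
  using assms by (induction us) auto

lemma wellformed_mkvec:
  assumes "n < N" and "p \<in> wants ps H n"
  shows "wellformed_vec N ps H (mkvec N ps H p)"
  unfolding wellformed_vec_def
proof (intro conjI)
  have "p \<in> coded N (mkvec N ps H p)"
    using assms unfolding coded_def mkvec_def by auto
  then show "coded N (mkvec N ps H p) \<noteq> {}" by blast
qed (simp_all add: mkvec_def)

lemma wellformed_merge:
  assumes u: "wellformed_vec N ps H u" and v: "wellformed_vec N ps H v"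
    and uv: "mergeable N u v"
  shows "wellformed_vec N ps H (merge u v)"
  unfolding wellformed_vec_def
proof (intro conjI allI impI)
  fix n p assume n: "n < N" and p: "merge u v n = Some p"
  show "p \<in> wants ps H n"
  proof (cases "u n")
    case None
    with p have "v n = Some p" by (simp add: merge_def)
    with v n show ?thesis unfolding wellformed_vec_def by blast
  next
    case (Some r)
    with p have "u n = Some p" by (simp add: merge_def)
    with u n show ?thesis unfolding wellformed_vec_def by blast
  qed
next
  fix n m q assume nm: "n < N" "m < N" and q: "merge u v m = Some q" "q \<in> wants ps H n"
  show "merge u v n = Some q"
  proof (cases "u m")
    case None
    with q have "v m = Some q" by (simp add: merge_def)
    with v nm q have "v n = Some q" unfolding wellformed_vec_def by blast
    moreover from this uv nm have "u n = None" unfolding mergeable_def by auto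
    ultimately show ?thesis by (simp add: merge_def)
  next
    case (Some r)
    with q have "u m = Some q" by (simp add: merge_def)
    with u nm q have "u n = Some q" unfolding wellformed_vec_def by blast
    then show ?thesis by (simp add: merge_def)
  qed
next
  have "coded N u \<subseteq> coded N (merge u v)"
    unfolding coded_def merge_def by (force split: option.splits)
  then show "coded N (merge u v) \<noteq> {}"
    using u unfolding wellformed_vec_def by blast
qed

lemma wellformed_grouping_of:
  assumes "\<forall>p\<in>set xs. \<exists>n<N. p \<in> wants ps H n"
  shows "\<forall>u\<in>set (grouping_of N ps H xs). wellformed_vec N ps H u"
  using assms
proof (induction xs rule: rev_induct)
  case (snoc x xs)
  then obtain n where "n < N" "x \<in> wants ps H n" by auto
  then have "wellformed_vec N ps H (mkvec N ps H x)" by (rule wellformed_mkvec)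
  with snoc show ?case
    unfolding grouping_of_snoc by (intro insert_vec_preserves) (auto intro: wellformed_merge)
qed (simp add: grouping_of_def)

lemma sum_card_coded_grouping_of_le:
  assumes "distinct xs"
  shows "(\<Sum>u\<leftarrow>grouping_of N ps H xs. card (coded N u \<inter> A)) \<le> card (set xs \<inter> A)"
  using assms
proof (induction xs rule: rev_induct)
  case (snoc x xs)
  define k :: nat where "k = card ({x} \<inter> A)"
  let ?v = "mkvec N ps H x"
  have vk: "card (coded N ?v \<inter> A) \<le> k"
    unfolding k_def using coded_mkvec_subset[of N ps H x] by (intro card_mono) auto
  have "card (coded N (merge u ?v) \<inter> A) \<le> card (coded N u \<inter> A) + k" for u
  proof -
    have "card (coded N (merge u ?v) \<inter> A) \<le> card ((coded N u \<inter> A) \<union> (coded N ?v \<inter> A))"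
      using coded_merge_subset[of N u ?v] by (intro card_mono) (auto simp: finite_coded)
    also have "\<dots> \<le> card (coded N u \<inter> A) + card (coded N ?v \<inter> A)"
      by (rule card_Un_le)
    finally show ?thesis using vk by linarith
  qed
  then have "(\<Sum>u\<leftarrow>grouping_of N ps H (xs @ [x]). card (coded N u \<inter> A))
      \<le> (\<Sum>u\<leftarrow>grouping_of N ps H xs. card (coded N u \<inter> A)) + k"
    unfolding grouping_of_snoc by (intro sum_list_insert_vec_le vk)
  also have "\<dots> \<le> card (set xs \<inter> A) + k"
    using snoc by simp
  also have "\<dots> = card (set (xs @ [x]) \<inter> A)"
    using snoc.prems by (simp add: k_def Int_insert_left)
  finally show ?case .
qed (simp add: grouping_of_def)

lemma grouping_of_covers_wants:
  assumes "p \<in> set xs" and "n < N" and "p \<in> wants ps H n"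
  shows "\<exists>u\<in>set (grouping_of N ps H xs). u n = Some p"
  using assms(1)
proof (induction xs rule: rev_induct)
  case (snoc x xs)
  show ?case
  proof (cases "p = x")
    case True
    obtain w where "w \<in> set (grouping_of N ps H (xs @ [x]))"
        "\<forall>n<N. mkvec N ps H x n \<noteq> None \<longrightarrow> w n = mkvec N ps H x n"
      using insert_vec_contains_entries unfolding grouping_of_snoc by blast
    moreover from this(2) True assms(2,3) have "w n = Some x" by (simp add: mkvec_def)
    ultimately show ?thesis using True by blast
  next
    case False
    with snoc obtain u where "u \<in> set (grouping_of N ps H xs)" "u n = Some p" by auto
    then obtain w where "w \<in> set (grouping_of N ps H (xs @ [x]))" "\<forall>n. u n \<noteq> None \<longrightarrow> w n = u n"
      unfolding grouping_of_snoc using insert_vec_keeps_entries by blast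
    moreover from this(2) \<open>u n = Some p\<close> have "w n = Some p" by simp
    ultimately show ?thesis by blast
  qed
qed simp

section \<open>Sizes of the packet classes\<close>

lemma Mc_not_Md: "is_Mc N v \<Longrightarrow> \<not> is_Md N v"
  unfolding is_Mc_def is_Md_def by blast

lemma length_filter_Mc_Ml_Md:
  "length (filter (is_Mc N) xs) + 2 * length (filter (is_Ml N) xs) + length (filter (is_Md N) xs)
     = (\<Sum>v\<leftarrow>xs. if is_Ml N v then 2 else 1)"
  by (induction xs) (auto simp: is_Ml_def dest: Mc_not_Md)

lemma length_filter_Mc_Ml:
  "length (filter (is_Mc N) xs) + length (filter (is_Ml N) xs) = (\<Sum>v\<leftarrow>xs. if is_Md N v then 0 else 1)"
  by (induction xs) (auto simp: is_Ml_def dest: Mc_not_Md)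

lemma Ml_two_packets:
  assumes "is_Ml N v"
  shows "2 \<le> card (coded N v)"
proof -
  from assms have none: "\<forall>n<N. v n \<noteq> None" and "\<not> (\<forall>n<N. \<forall>m<N. v n = v m)"
    unfolding is_Ml_def is_Mc_def is_Md_def by auto
  then obtain n m where nm: "n < N" "m < N" "v n \<noteq> v m"
    by auto
  obtain p q where pq: "v n = Some p" "v m = Some q"
    using none nm(1,2) by fastforce
  with nm have "p \<noteq> q" and "{p, q} \<subseteq> coded N v"
    unfolding coded_def by auto
  then show ?thesis
    using card_mono[OF finite_coded, of "{p, q}" N v] by simp
qed

lemma length_Mc_Ml_Md_le:
  assumes "distinct ps" and "\<forall>p\<in>set ps. \<exists>n<N. p \<in> wants ps H n"
  shows "length (Mc N ps H) + 2 * length (Ml N ps H) + length (Md N ps H) \<le> length ps"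
proof -
  have wf: "\<forall>v\<in>set (grouping N ps H). wellformed_vec N ps H v"
    using wellformed_grouping_of[OF assms(2)] by (simp add: grouping_eq_grouping_of)
  have "length (Mc N ps H) + 2 * length (Ml N ps H) + length (Md N ps H)
      = (\<Sum>v\<leftarrow>grouping N ps H. if is_Ml N v then 2 else 1)"
    unfolding Mc_def Ml_def Md_def by (rule length_filter_Mc_Ml_Md)
  also have "\<dots> \<le> (\<Sum>v\<leftarrow>grouping N ps H. card (coded N v \<inter> UNIV))"
  proof (rule sum_list_mono)
    fix v assume "v \<in> set (grouping N ps H)"
    with wf have "coded N v \<noteq> {}" unfolding wellformed_vec_def by blast
    then have "0 < card (coded N v)"
      by (simp add: card_gt_0_iff finite_coded)
    then show "(if is_Ml N v then 2 else 1) \<le> card (coded N v \<inter> UNIV)"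
      using Ml_two_packets[of N v] by simp
  qed
  also have "\<dots> \<le> card (set ps \<inter> UNIV)"
    unfolding grouping_eq_grouping_of by (rule sum_card_coded_grouping_of_le[OF assms(1)])
  also have "\<dots> = length ps"
    using assms(1) by (simp add: distinct_card)
  finally show ?thesis .
qed

lemma length_Mc_Ml_le_card_wants:
  assumes "distinct ps" and "\<forall>p\<in>set ps. \<exists>n<N. p \<in> wants ps H n" and "n < N"
  shows "length (Mc N ps H) + length (Ml N ps H) \<le> card (wants ps H n)"
proof -
  have wf: "\<forall>v\<in>set (grouping N ps H). wellformed_vec N ps H v"
    using wellformed_grouping_of[OF assms(2)] by (simp add: grouping_eq_grouping_of)
  have "length (Mc N ps H) + length (Ml N ps H) = (\<Sum>v\<leftarrow>grouping N ps H. if is_Md N v then 0 else 1)"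
    unfolding Mc_def Ml_def by (rule length_filter_Mc_Ml)
  also have "\<dots> \<le> (\<Sum>v\<leftarrow>grouping N ps H. card (coded N v \<inter> wants ps H n))"
  proof (rule sum_list_mono)
    fix v assume v: "v \<in> set (grouping N ps H)"
    show "(if is_Md N v then 0 else 1) \<le> card (coded N v \<inter> wants ps H n)"
    proof (cases "is_Md N v")
      case False
      with assms(3) obtain p where p: "v n = Some p" unfolding is_Md_def by auto
      with wf v assms(3) have "p \<in> wants ps H n" unfolding wellformed_vec_def by blast
      moreover from p assms(3) have "p \<in> coded N v" unfolding coded_def by auto
      ultimately have "coded N v \<inter> wants ps H n \<noteq> {}" by blast
      then have "0 < card (coded N v \<inter> wants ps H n)"
        by (simp add: card_gt_0_iff finite_coded)
      with False show ?thesis by simp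
    qed simp
  qed
  also have "\<dots> \<le> card (set ps \<inter> wants ps H n)"
    unfolding grouping_eq_grouping_of by (rule sum_card_coded_grouping_of_le[OF assms(1)])
  also have "set ps \<inter> wants ps H n = wants ps H n"
    unfolding wants_def by auto
  finally show ?thesis .
qed

section \<open>Scheduler dynamics\<close>

definition sched_done :: "'p sstate \<Rightarrow> bool" where
  "sched_done st \<longleftrightarrow> (case st of (cs, ls, ds, pend) \<Rightarrow> cs = [] \<and> ls = [] \<and> ds = [] \<and> pend = None)"

definition pending_only_without_Md :: "'p sstate \<Rightarrow> bool" where
  "pending_only_without_Md st \<longleftrightarrow> (case st of (cs, ls, ds, pend) \<Rightarrow> pend \<noteq> None \<longrightarrow> ds = [])"

abbreviation ncmi_next :: "nat \<Rightarrow> ('p vec \<Rightarrow> 'p set \<times> 'p set) \<Rightarrow> 'p sstate \<Rightarrow> 'p sstate" where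
  "ncmi_next N sp st \<equiv> snd (ncmi_step N sp st)"

lemma list_cases_012:
  obtains "xs = []" | x where "xs = [x]" | x y zs where "xs = x # y # zs"
  by (metis list.exhaust)

lemma ncmi_next_done: "sched_done st \<Longrightarrow> ncmi_next N sp st = st"
  by (cases st) (auto simp: sched_done_def ncmi_step_def)

lemma ncmi_next_pending_only_without_Md:
  "pending_only_without_Md st \<Longrightarrow> pending_only_without_Md (ncmi_next N sp st)"
  by (cases st) (auto simp: pending_only_without_Md_def ncmi_step_def Let_def split: option.splits if_splits)

lemma ncmi_state_eq_funpow: "ncmi_state N ps H sp k = (ncmi_next N sp ^^ k) (ncmi_init N ps H)"
  by (induction k) auto

lemma funpow_reaches_done:
  fixes g :: "'a \<Rightarrow> real"
  assumes decreases: "\<And>s. I s \<Longrightarrow> \<not> D s \<Longrightarrow> D (F s) \<or> g (F s) + 1 \<le> g s"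
    and pos: "\<And>s. \<not> D s \<Longrightarrow> 0 < g s"
    and invariant: "\<And>s. I s \<Longrightarrow> I (F s)"
    and fixpoint: "\<And>s. D s \<Longrightarrow> F s = s"
  shows "I s \<Longrightarrow> nat \<lceil>g s\<rceil> \<le> n \<Longrightarrow> D ((F ^^ n) s)"
proof (induction n arbitrary: s)
  case 0
  then show ?case using pos[of s] by fastforce
next
  case (Suc n)
  have stays: "D s' \<Longrightarrow> D ((F ^^ k) s')" for s' k
    using fixpoint by (induction k) auto
  have shift: "(F ^^ Suc n) s = (F ^^ n) (F s)"
    by (metis comp_apply funpow_Suc_right)
  show ?case
  proof (cases "D s \<or> D (F s)")
    case True
    then show ?thesis
      unfolding shift using stays fixpoint by metis
  next
    case False
    with decreases Suc.prems(1) have "g (F s) + 1 \<le> g s" by blast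
    then have "\<lceil>g (F s)\<rceil> + 1 \<le> \<lceil>g s\<rceil>"
      by (metis ceiling_add_one ceiling_mono)
    with Suc.prems(2) have "nat \<lceil>g (F s)\<rceil> \<le> n" by linarith
    with Suc.IH invariant Suc.prems(1) show ?thesis
      unfolding shift by blast
  qed
qed

lemma ncmi_step_trace:
  assumes "ncmi_step N sp (cs, ls, ds, pend) = (tx, (cs', ls', ds', pend'))"
  shows "set ls' \<subseteq> set ls"
    and "pend' = None \<or> pend' = pend \<or> (\<exists>v. pend' = Some v \<and> v \<in> set ls \<and> fst (sp v) \<in> set tx)"
    and "v \<in> set cs \<or> v \<in> set ls \<or> v \<in> set ds \<or> pend = Some v \<Longrightarrow>
         v \<in> set cs' \<or> v \<in> set ls' \<or> v \<in> set ds' \<or> pend' = Some v \<or> coded N v \<in> set tx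
         \<or> (pend = Some v \<and> snd (sp v) \<in> set tx)"
  using assms
  by (cases cs; cases ls rule: list_cases_012; cases ds rule: list_cases_012; cases pend;
      auto simp: ncmi_step_def Let_def split: if_splits)+

definition delivered :: "nat \<Rightarrow> 'p list \<Rightarrow> (nat \<Rightarrow> 'p set) \<Rightarrow> ('p vec \<Rightarrow> 'p set \<times> 'p set)
    \<Rightarrow> nat \<Rightarrow> 'p vec \<Rightarrow> bool" where
  "delivered N ps H sp k v \<longleftrightarrow>
     (\<exists>s\<in>{1..k}. coded N v \<in> set (ncmi_tx N ps H sp s)) \<or>
     (v \<in> set (Ml N ps H) \<and> (\<exists>s\<in>{1..k}. fst (sp v) \<in> set (ncmi_tx N ps H sp s)) \<and>
        (\<exists>s\<in>{1..k}. snd (sp v) \<in> set (ncmi_tx N ps H sp s)))"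

lemma delivered_Suc: "delivered N ps H sp k v \<Longrightarrow> delivered N ps H sp (Suc k) v"
  unfolding delivered_def by (meson atLeastAtMost_iff le_SucI)

lemma ncmi_state_Suc_tx:
  assumes "ncmi_state N ps H sp k = st" and "ncmi_step N sp st = (tx, st')"
  shows "ncmi_state N ps H sp (Suc k) = st'" and "ncmi_tx N ps H sp (Suc k) = tx"
  using assms by (simp_all add: ncmi_tx_def)

lemma ncmi_state_Ml_pending:
  "case ncmi_state N ps H sp k of (cs, ls, ds, pend) \<Rightarrow>
     set ls \<subseteq> set (Ml N ps H) \<and>
     (\<forall>v. pend = Some v \<longrightarrow> v \<in> set (Ml N ps H) \<and> (\<exists>s\<in>{1..k}. fst (sp v) \<in> set (ncmi_tx N ps H sp s)))"
proof (induction k)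
  case 0
  show ?case by (simp add: ncmi_init_def)
next
  case (Suc k)
  obtain cs ls ds pend where st: "ncmi_state N ps H sp k = (cs, ls, ds, pend)"
    by (rule prod_cases4)
  obtain tx cs' ls' ds' pend' where step: "ncmi_step N sp (cs, ls, ds, pend) = (tx, (cs', ls', ds', pend'))"
    by (rule prod_cases5)
  note next_state = ncmi_state_Suc_tx[OF st step]
  from Suc.IH st have ls: "set ls \<subseteq> set (Ml N ps H)"
    and pend: "\<forall>v. pend = Some v \<longrightarrow> v \<in> set (Ml N ps H) \<and> (\<exists>s\<in>{1..k}. fst (sp v) \<in> set (ncmi_tx N ps H sp s))"
    by auto
  have "v \<in> set (Ml N ps H) \<and> (\<exists>s\<in>{1..Suc k}. fst (sp v) \<in> set (ncmi_tx N ps H sp s))"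
    if v: "pend' = Some v" for v
    using ncmi_step_trace(2)[OF step]
  proof (elim disjE)
    assume "pend' = pend"
    with pend v obtain s where "v \<in> set (Ml N ps H)" "s \<in> {1..k}" "fst (sp v) \<in> set (ncmi_tx N ps H sp s)"
      by auto
    then show ?thesis by (intro conjI bexI[of _ s]) auto
  next
    assume "\<exists>v. pend' = Some v \<and> v \<in> set ls \<and> fst (sp v) \<in> set tx"
    with v ls next_state(2) show ?thesis by force
  qed (use v in simp)
  with ncmi_step_trace(1)[OF step] ls show ?case
    unfolding next_state(1) by auto
qed

lemma ncmi_state_outstanding_or_delivered:
  assumes "v \<in> set (grouping N ps H)"
  shows "case ncmi_state N ps H sp k of (cs, ls, ds, pend) \<Rightarrow>
     v \<in> set cs \<or> v \<in> set ls \<or> v \<in> set ds \<or> pend = Some v \<or> delivered N ps H sp k v"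
proof (induction k)
  case 0
  show ?case
    using assms by (auto simp: ncmi_init_def Mc_def Ml_def Md_def is_Ml_def)
next
  case (Suc k)
  obtain cs ls ds pend where st: "ncmi_state N ps H sp k = (cs, ls, ds, pend)"
    by (rule prod_cases4)
  obtain tx cs' ls' ds' pend' where step: "ncmi_step N sp (cs, ls, ds, pend) = (tx, (cs', ls', ds', pend'))"
    by (rule prod_cases5)
  note next_state = ncmi_state_Suc_tx[OF st step]
  have pend: "pend = Some v \<Longrightarrow> v \<in> set (Ml N ps H) \<and> (\<exists>s\<in>{1..k}. fst (sp v) \<in> set (ncmi_tx N ps H sp s))"
    using ncmi_state_Ml_pending[where N = N and ps = ps and H = H and sp = sp and k = k] st by auto
  have "v \<in> set cs' \<or> v \<in> set ls' \<or> v \<in> set ds' \<or> pend' = Some v \<or> delivered N ps H sp (Suc k) v"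
  proof (cases "delivered N ps H sp k v")
    case False
    with Suc.IH st have "v \<in> set cs \<or> v \<in> set ls \<or> v \<in> set ds \<or> pend = Some v" by auto
    from ncmi_step_trace(3)[OF step this] show ?thesis
    proof (elim disjE)
      assume "coded N v \<in> set tx"
      then have "delivered N ps H sp (Suc k) v"
        unfolding delivered_def using next_state(2) by (intro disjI1 bexI[of _ "Suc k"]) auto
      then show ?thesis by blast
    next
      assume "pend = Some v \<and> snd (sp v) \<in> set tx"
      with pend obtain s where "v \<in> set (Ml N ps H)" "s \<in> {1..k}" "fst (sp v) \<in> set (ncmi_tx N ps H sp s)"
        "snd (sp v) \<in> set (ncmi_tx N ps H sp (Suc k))"
        using next_state(2) by auto
      then have "delivered N ps H sp (Suc k) v"
        unfolding delivered_def by (intro disjI2 conjI bexI[of _ s] bexI[of _ "Suc k"]) auto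
      then show ?thesis by blast
    qed auto
  qed (simp add: delivered_Suc)
  then show ?case unfolding next_state(1) by simp
qed

section \<open>Decoding\<close>

lemma wellformed_coded_minus_subset_Has:
  assumes "wellformed_vec N ps H v" and "n < N" and "v n = Some p"
  shows "coded N v - {p} \<subseteq> H n"
proof
  fix q assume "q \<in> coded N v - {p}"
  then obtain m where m: "m < N" "v m = Some q" "q \<noteq> p"
    unfolding coded_def by auto
  with assms(1) have "q \<in> wants ps H m"
    unfolding wellformed_vec_def by blast
  moreover have "q \<notin> wants ps H n"
  proof
    assume "q \<in> wants ps H n"
    with assms(1,2) m(1,2) have "v n = Some q"
      unfolding wellformed_vec_def by blast
    with assms(3) m(3) show False by simp
  qed
  ultimately show "q \<in> H n"
    unfolding wants_def by auto
qed

lemma decoded_by_if_sent: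
  assumes "s \<in> {1..t}" and "S \<in> set (ncmi_tx N ps H sp s)" and "p \<in> S" and "S - {p} \<subseteq> H n"
  shows "decoded_by N ps H sp t n p"
  unfolding decoded_by_def using assms by blast

lemma decoded_by_if_delivered:
  assumes "wellformed_vec N ps H v" and "delivered N ps H sp t v"
    and "n < N" and "v n = Some p" and "valid_split N ps H sp"
  shows "decoded_by N ps H sp t n p"
proof -
  have p: "p \<in> coded N v"
    unfolding coded_def using assms(3,4) by auto
  have others: "coded N v - {p} \<subseteq> H n"
    using wellformed_coded_minus_subset_Has[OF assms(1,3,4)] .
  from assms(2) show ?thesis
    unfolding delivered_def
  proof (elim disjE conjE bexE)
    fix s assume "s \<in> {1..t}" "coded N v \<in> set (ncmi_tx N ps H sp s)"
    from decoded_by_if_sent[OF this p others] show ?thesis .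
  next
    fix s s' assume "v \<in> set (Ml N ps H)"
      and fst: "s \<in> {1..t}" "fst (sp v) \<in> set (ncmi_tx N ps H sp s)"
      and snd: "s' \<in> {1..t}" "snd (sp v) \<in> set (ncmi_tx N ps H sp s')"
    with assms(5) have parts: "fst (sp v) \<union> snd (sp v) = coded N v"
      unfolding valid_split_def by blast
    then have "fst (sp v) - {p} \<subseteq> H n" and "snd (sp v) - {p} \<subseteq> H n"
      using others by auto
    moreover have "p \<in> fst (sp v) \<or> p \<in> snd (sp v)"
      using p parts by auto
    ultimately show ?thesis
      using decoded_by_if_sent[OF fst] decoded_by_if_sent[OF snd] by blast
  qed
qed

lemma all_decoded_if_sched_done:
  assumes "distinct ps" and "\<forall>p\<in>set ps. \<exists>n<N. p \<in> wants ps H n" and "valid_split N ps H sp"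
    and "sched_done (ncmi_state N ps H sp t)"
  shows "all_decoded N ps H sp t"
  unfolding all_decoded_def
proof (intro allI impI ballI)
  fix n p assume n: "n < N" and p: "p \<in> wants ps H n"
  then have "p \<in> set ps"
    unfolding wants_def by auto
  from grouping_of_covers_wants[OF this n p] obtain v
    where v: "v \<in> set (grouping N ps H)" "v n = Some p"
    by (auto simp only: grouping_eq_grouping_of)
  have "wellformed_vec N ps H v"
    using wellformed_grouping_of[OF assms(2)] v(1) by (simp only: grouping_eq_grouping_of)
  moreover have "delivered N ps H sp t v"
  proof -
    obtain cs ls ds pend where st: "ncmi_state N ps H sp t = (cs, ls, ds, pend)"
      by (rule prod_cases4)
    with assms(4) have "cs = []" "ls = []" "ds = []" "pend = None"
      by (simp_all add: sched_done_def)
    with ncmi_state_outstanding_or_delivered[OF v(1), where sp = sp and k = t] st show ?thesis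
      by simp
  qed
  ultimately show "decoded_by N ps H sp t n p"
    using n v(2) assms(3) by (rule decoded_by_if_delivered)
qed

lemma completion_time_le_potential:
  fixes g :: "'p sstate \<Rightarrow> real"
  assumes "distinct ps" and "\<forall>p\<in>set ps. \<exists>n<N. p \<in> wants ps H n" and "valid_split N ps H sp"
    and decreases: "\<And>st. pending_only_without_Md st \<Longrightarrow> \<not> sched_done st \<Longrightarrow>
                       sched_done (ncmi_next N sp st) \<or> g (ncmi_next N sp st) + 1 \<le> g st"
    and pos: "\<And>st. \<not> sched_done st \<Longrightarrow> 0 < g st"
    and nonneg: "0 \<le> g (ncmi_init N ps H)"
  shows "int (completion_time N ps H sp) \<le> \<lceil>g (ncmi_init N ps H)\<rceil>"
proof -
  define t where "t = nat \<lceil>g (ncmi_init N ps H)\<rceil>"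
  have "pending_only_without_Md (ncmi_init N ps H)"
    by (simp add: ncmi_init_def pending_only_without_Md_def)
  then have "sched_done ((ncmi_next N sp ^^ t) (ncmi_init N ps H))"
    unfolding t_def
    using funpow_reaches_done[of pending_only_without_Md sched_done "ncmi_next N sp" g,
        OF decreases pos ncmi_next_pending_only_without_Md ncmi_next_done]
    by blast
  then have "all_decoded N ps H sp t"
    by (intro all_decoded_if_sched_done assms(1-3)) (simp add: ncmi_state_eq_funpow)
  then have "completion_time N ps H sp \<le> t"
    unfolding completion_time_def by (rule Least_le)
  with nonneg show ?thesis
    unfolding t_def by linarith
qed

section \<open>Potentials\<close>

text \<open>A slot carries at most
  two transmissions, at most one of them an \<open>M\<^sub>c\<close> packet, and \<open>c + 2 l + d\<close> transmissions
  (plus a pending second part) are outstanding; this gives \<open>potential_M\<close>. In \<open>potential_W\<close>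
  a slot removes three units of \<open>2 c + 2 l + d\<close> while the cellular link still sends
  \<open>M\<^sub>c\<close> or \<open>M\<^sub>l\<close> packets; afterwards both links send \<open>M\<^sub>d\<close> packets and the
  last term drops.\<close>

definition potential_M :: "'p sstate \<Rightarrow> real" where
  "potential_M st = (case st of (cs, ls, ds, pend) \<Rightarrow>
     max (real (length cs))
       ((real (length cs) + 2 * real (length ls) + real (length ds) + (if pend = None then 0 else 1)) / 2))"

definition potential_W :: "'p sstate \<Rightarrow> real" where
  "potential_W st = (case st of (cs, ls, ds, pend) \<Rightarrow>
     max (real (length cs))
       (max ((2 * real (length cs) + 2 * real (length ls) + real (length ds) + (if pend = None then 0 else 1)) / 3)
            ((real (length cs) + real (length ls) + real (length ds)) / 2)))"

lemma potential_M_pos: "\<not> sched_done st \<Longrightarrow> 0 < potential_M st"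
  by (cases st) (fastforce simp: sched_done_def potential_M_def less_max_iff_disj neq_Nil_conv)

lemma potential_W_pos: "\<not> sched_done st \<Longrightarrow> 0 < potential_W st"
  by (cases st) (fastforce simp: sched_done_def potential_W_def less_max_iff_disj neq_Nil_conv)

lemma potential_M_decreases:
  assumes "pending_only_without_Md st" and "\<not> sched_done st"
  shows "sched_done (ncmi_next N sp st) \<or> potential_M (ncmi_next N sp st) + 1 \<le> potential_M st"
proof -
  obtain cs ls ds pend where st: "st = (cs, ls, ds, pend)"
    by (rule prod_cases4)
  show ?thesis
    using assms unfolding st
    by (cases cs; cases ls rule: list_cases_012; cases ds rule: list_cases_012; cases pend)
      (auto simp: pending_only_without_Md_def sched_done_def potential_M_def ncmi_step_def Let_def max_def)
qed

lemma potential_W_decreases: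
  assumes "pending_only_without_Md st" and "\<not> sched_done st"
  shows "sched_done (ncmi_next N sp st) \<or> potential_W (ncmi_next N sp st) + 1 \<le> potential_W st"
proof -
  obtain cs ls ds pend where st: "st = (cs, ls, ds, pend)"
    by (rule prod_cases4)
  show ?thesis
    using assms unfolding st
    by (cases cs; cases ls rule: list_cases_012; cases ds rule: list_cases_012; cases pend)
      (auto simp: pending_only_without_Md_def sched_done_def potential_W_def ncmi_step_def Let_def max_def)
qed

lemma potential_M_init_le:
  assumes "distinct ps" and "\<forall>p\<in>set ps. \<exists>n<N. p \<in> wants ps H n"
  shows "potential_M (ncmi_init N ps H) \<le> max (real (length ps) / 2) (real (length (Mc N ps H)))"
  using length_Mc_Ml_Md_le[OF assms]
  by (auto simp: potential_M_def ncmi_init_def max_def)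

lemma potential_W_init_le:
  assumes "distinct ps" and "\<forall>p\<in>set ps. \<exists>n<N. p \<in> wants ps H n" and "n < N"
  shows "potential_W (ncmi_init N ps H) \<le>
    max (real (length (Mc N ps H)))
      (max ((2 * real (card (wants ps H n)) + real (length (Md N ps H))) / 3)
           ((real (card (wants ps H n)) + real (length (Md N ps H))) / 2))"
  using length_Mc_Ml_le_card_wants[OF assms]
  by (auto simp: potential_W_def ncmi_init_def max_def)

lemma potential_nonneg: "0 \<le> potential_M st" "0 \<le> potential_W st"
  by (cases st; simp add: potential_M_def potential_W_def)+

theorem theorem2:
  fixes N :: nat and ps :: "'p list" and H :: "nat \<Rightarrow> 'p set"
    and sp :: "'p vec \<Rightarrow> 'p set \<times> 'p set"
  assumes "N \<ge> 2"
    and "distinct ps"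
    and "\<forall>n<N. H n \<subseteq> set ps"
    and "\<forall>p\<in>set ps. \<exists>n<N. p \<in> wants ps H n"
    and "valid_split N ps H sp"
  shows "int (completion_time N ps H sp) \<le>
    \<lceil>min (max (real (length ps) / 2) (real (length (Mc N ps H))))
         (max (real (length (Mc N ps H)))
              (max ((2 * real (Min ((\<lambda>n. card (wants ps H n)) ` {..<N})) + real (length (Md N ps H))) / 3)
                   ((real (Min ((\<lambda>n. card (wants ps H n)) ` {..<N})) + real (length (Md N ps H))) / 2)))\<rceil>"
    (is "_ \<le> \<lceil>min ?bound_M ?bound_W\<rceil>")
proof -
  have "Min ((\<lambda>n. card (wants ps H n)) ` {..<N}) \<in> (\<lambda>n. card (wants ps H n)) ` {..<N}"
    using assms(1) by (intro Min_in) (auto simp: lessThan_empty_iff)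
  then obtain n where n: "n < N" and min_wants: "Min ((\<lambda>n. card (wants ps H n)) ` {..<N}) = card (wants ps H n)"
    by auto
  have "int (completion_time N ps H sp) \<le> \<lceil>potential_M (ncmi_init N ps H)\<rceil>"
    using assms(2,4,5) potential_M_decreases potential_M_pos potential_nonneg(1)
    by (rule completion_time_le_potential)
  also have "\<dots> \<le> \<lceil>?bound_M\<rceil>"
    using potential_M_init_le[OF assms(2,4)] by (rule ceiling_mono)
  finally have "int (completion_time N ps H sp) \<le> \<lceil>?bound_M\<rceil>" .
  moreover have "int (completion_time N ps H sp) \<le> \<lceil>potential_W (ncmi_init N ps H)\<rceil>"
    using assms(2,4,5) potential_W_decreases potential_W_pos potential_nonneg(2)
    by (rule completion_time_le_potential)
  moreover have "\<dots> \<le> \<lceil>?bound_W\<rceil>"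
    using potential_W_init_le[OF assms(2,4) n] unfolding min_wants by (rule ceiling_mono)
  ultimately show ?thesis
    by (simp add: min_def)
qed

end
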